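(* Let $A, M, F \in \mathbb{C}^{n\times n}$ with $M$ and $F$ nonsingular, and let $I$ be the $n\times n$ identity matrix. Define the $2n\times 2n$ matrix \[ Q := \begin{bmatrix} 0 & I - M^{-1}A \\ I - F^{-1}A & 0 \end{bmatrix}. \] If $\rho(|Q|) < 1$, then \[ \rho\left(\left| I - F^{-1}(M + F - A) M^{-1} A \right|\right) < 1. \]
   Context: For a matrix $\mathcal A$, $|\mathcal A|$ denotes the entrywise absolute value (modulus) and $\rho(\mathcal A)$ denotes its spectral radius. *)

theory Defs
  imports "Jordan_Normal_Form.Spectral_Radius"
begin

text \<open>Entrywise modulus of a complex matrix, viewed again as a complex matrix
  (with nonnegative real entries), so that the spectral radius applies.\<close>
definition abs_mat :: "complex mat \<Rightarrow> complex mat" where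
  "abs_mat A = map_mat (\<lambda>x. complex_of_real (cmod x)) A"

end

theory Submission
  imports Defs
begin

(* With B = I - M^-1 A and C = I - F^-1 A the iteration matrix factors as C B, so its modulus
  is entrywise dominated by |C| |B|, while |Q|^2 is block diagonal with diagonal blocks |B| |C|
  and |C| |B|. Hence rho |C B| <= rho (|C| |B|) <= (rho |Q|)^2 < 1. Both inequalities avoid
  Perron-Frobenius theory: rho X <= r holds as soon as the entries of X^k are O(s^k) for every
  s > r (an eigenvector grows like |lambda|^k), and conversely rho X < s yields such a bound
  (by the Jordan normal form). *)

lemma dim_abs_mat [simp]: "dim_row (abs_mat A) = dim_row A" "dim_col (abs_mat A) = dim_col A"
  unfolding abs_mat_def by simp_all

lemma abs_mat_carrier_mat [simp]: "abs_mat A \<in> carrier_mat nr nc \<longleftrightarrow> A \<in> carrier_mat nr nc"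
  unfolding carrier_mat_def by simp

lemma abs_mat_zero_mat [simp]: "abs_mat (0\<^sub>m nr nc) = 0\<^sub>m nr nc"
  unfolding abs_mat_def by (intro eq_matI) auto

lemma abs_mat_four_block_mat:
  assumes "A \<in> carrier_mat nr1 nc1" "B \<in> carrier_mat nr1 nc2"
    and "C \<in> carrier_mat nr2 nc1" "D \<in> carrier_mat nr2 nc2"
  shows "abs_mat (four_block_mat A B C D)
       = four_block_mat (abs_mat A) (abs_mat B) (abs_mat C) (abs_mat D)"
  using assms unfolding abs_mat_def by (intro eq_matI) auto

definition abs_le_mat :: "complex mat \<Rightarrow> complex mat \<Rightarrow> bool" where
  "abs_le_mat X Z \<longleftrightarrow> dim_row X = dim_row Z \<and> dim_col X = dim_col Z \<and>
    (\<forall>i<dim_row X. \<forall>j<dim_col X. Im (Z $$ (i,j)) = 0 \<and> cmod (X $$ (i,j)) \<le> Re (Z $$ (i,j)))"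

lemma abs_le_mat_mult:
  assumes XZ: "abs_le_mat X Z" and XZ': "abs_le_mat X' Z'" and dim: "dim_col X = dim_row X'"
  shows "abs_le_mat (X * X') (Z * Z')"
  unfolding abs_le_mat_def
proof (intro conjI allI impI)
  fix i j assume "i < dim_row (X * X')" "j < dim_col (X * X')"
  then have i: "i < dim_row X" and j: "j < dim_col X'" by simp_all
  let ?m = "dim_col X"
  have real: "Im (Z $$ (i,k)) = 0" "Im (Z' $$ (k,j)) = 0"
    and le: "cmod (X $$ (i,k)) \<le> Re (Z $$ (i,k))" "cmod (X' $$ (k,j)) \<le> Re (Z' $$ (k,j))"
    if "k < ?m" for k
    using XZ XZ' dim i j that unfolding abs_le_mat_def by auto
  have ZZ: "(Z * Z') $$ (i,j) = (\<Sum>k<?m. Z $$ (i,k) * Z' $$ (k,j))"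
   and XX: "(X * X') $$ (i,j) = (\<Sum>k<?m. X $$ (i,k) * X' $$ (k,j))"
    using XZ XZ' dim i j unfolding abs_le_mat_def by (simp_all add: scalar_prod_def atLeast0LessThan)
  show "Im ((Z * Z') $$ (i,j)) = 0"
    unfolding ZZ Im_sum using real by (intro sum.neutral) auto
  have "cmod ((X * X') $$ (i,j)) \<le> (\<Sum>k<?m. cmod (X $$ (i,k)) * cmod (X' $$ (k,j)))"
    unfolding XX by (rule order_trans[OF norm_sum]) (simp add: norm_mult)
  also have "\<dots> \<le> (\<Sum>k<?m. Re (Z $$ (i,k)) * Re (Z' $$ (k,j)))"
    using le by (intro sum_mono mult_mono) (auto intro: order_trans[OF norm_ge_zero])
  also have "\<dots> = Re ((Z * Z') $$ (i,j))"
    unfolding ZZ Re_sum using real by (intro sum.cong) auto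
  finally show "cmod ((X * X') $$ (i,j)) \<le> Re ((Z * Z') $$ (i,j))" .
qed (use XZ XZ' in \<open>simp_all add: abs_le_mat_def\<close>)

lemma abs_le_mat_one: "abs_le_mat (1\<^sub>m n) (1\<^sub>m n)"
  unfolding abs_le_mat_def by simp

lemma abs_le_mat_pow:
  assumes "abs_le_mat X Z" and "X \<in> carrier_mat n n"
  shows "abs_le_mat (X ^\<^sub>m k) (Z ^\<^sub>m k)"
proof (induction k)
  case 0
  have "Z \<in> carrier_mat n n" using assms unfolding abs_le_mat_def by auto
  then show ?case using assms abs_le_mat_one by simp
next
  case (Suc k)
  then show ?case using assms by (simp add: abs_le_mat_mult)
qed

lemma abs_le_mat_abs_mat: "abs_le_mat X (abs_mat X)"
  unfolding abs_le_mat_def abs_mat_def by simp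

lemma abs_le_mat_abs_mat_iff: "abs_le_mat (abs_mat X) Z \<longleftrightarrow> abs_le_mat X Z"
  unfolding abs_le_mat_def abs_mat_def by simp

lemma norm_bound_if_abs_le_mat:
  assumes "abs_le_mat X Z" and "norm_bound Z b"
  shows "norm_bound X b"
  using assms unfolding abs_le_mat_def norm_bound_def
  by (metis complex_Re_le_cmod order_trans)

lemma spectral_radius_carrier_mat_0:
  assumes "A \<in> carrier_mat 0 0"
  shows "spectral_radius A = Max {}"
proof -
  have "spectrum A = {}" using eigenvalue_imp_nonzero_dim[OF assms] unfolding spectrum_def by blast
  then show ?thesis unfolding spectral_radius_def by simp
qed

lemma spectral_radius_nonneg:
  assumes "A \<in> carrier_mat n n" and "n > 0"
  shows "0 \<le> spectral_radius A"
  using spectral_radius_mem_max(1)[OF assms] by auto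

lemma eigenvector_smult_mat:
  assumes A: "A \<in> carrier_mat n n" and v: "eigenvector A v \<mu>"
  shows "eigenvector (c \<cdot>\<^sub>m A) v (c * \<mu>)"
proof -
  have "v \<in> carrier_vec n" using A v unfolding eigenvector_def by simp
  then have "(c \<cdot>\<^sub>m A) *\<^sub>v v = c \<cdot>\<^sub>v (A *\<^sub>v v)"
    using A by (intro eq_vecI) (auto simp: scalar_prod_def sum_distrib_left ac_simps)
  then show ?thesis
    using v unfolding eigenvector_def by (simp add: smult_smult_assoc)
qed

lemma spectral_radius_smult_mat_le:
  fixes c :: complex
  assumes A: "A \<in> carrier_mat n n" and n: "n > 0" and c: "c \<noteq> 0"
  shows "spectral_radius (c \<cdot>\<^sub>m A) \<le> cmod c * spectral_radius A"
proof -
  have cA: "c \<cdot>\<^sub>m A \<in> carrier_mat n n" using A by simp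
  obtain \<mu> where "\<mu> \<in> spectrum (c \<cdot>\<^sub>m A)" and \<rho>: "spectral_radius (c \<cdot>\<^sub>m A) = cmod \<mu>"
    using spectral_radius_mem_max(1)[OF cA n] by auto
  then obtain v where "eigenvector (c \<cdot>\<^sub>m A) v \<mu>"
    unfolding spectrum_def eigenvalue_def by auto
  moreover have "inverse c \<cdot>\<^sub>m (c \<cdot>\<^sub>m A) = A" using c by (intro eq_matI) auto
  ultimately have "eigenvector A v (\<mu> / c)"
    using eigenvector_smult_mat[OF cA, of v \<mu> "inverse c"] by (simp add: field_simps)
  then have "\<mu> / c \<in> spectrum A" unfolding spectrum_def eigenvalue_def by auto
  then have "cmod (\<mu> / c) \<le> spectral_radius A"
    using spectral_radius_mem_max(2)[OF A n] by blast
  then show ?thesis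
    using c by (simp add: \<rho> norm_divide field_simps)
qed

lemma pow_smult_mat:
  assumes "A \<in> carrier_mat n n"
  shows "(c \<cdot>\<^sub>m A) ^\<^sub>m k = (c ^ k :: 'a :: comm_semiring_1) \<cdot>\<^sub>m (A ^\<^sub>m k)"
  using assms by (induction k) (auto simp: mult_smult_assoc_mat mult_smult_distrib ac_simps)

lemma power_bound_if_spectral_radius_less:
  assumes A: "A \<in> carrier_mat n n" and n: "n > 0" and \<rho>: "spectral_radius A < s"
  shows "\<exists>c. \<forall>k. norm_bound (A ^\<^sub>m k) (c * s ^ k)"
proof -
  have s: "s > 0" using spectral_radius_nonneg[OF A n] \<rho> by linarith
  let ?T = "complex_of_real (inverse s) \<cdot>\<^sub>m A"
  have "spectral_radius ?T \<le> inverse s * spectral_radius A"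
    using spectral_radius_smult_mat_le[OF A n, of "complex_of_real (inverse s)"] s
    by (simp add: norm_inverse)
  also have "\<dots> < 1" using \<rho> s by (simp add: field_simps)
  finally obtain c where c: "\<And>k. norm_bound (?T ^\<^sub>m k) c"
    using spectral_radius_jnf_norm_bound_less_1_upper_triangular[of ?T n] A by auto
  have "norm_bound (A ^\<^sub>m k) (c * s ^ k)" for k
  proof
    fix i j assume "i < dim_row (A ^\<^sub>m k)" "j < dim_col (A ^\<^sub>m k)"
    then have ij: "i < n" "j < n" using pow_carrier_mat[OF A, of k] by auto
    have "(?T ^\<^sub>m k) $$ (i,j) = complex_of_real (inverse s ^ k) * (A ^\<^sub>m k) $$ (i,j)"
      using A ij by (simp add: pow_smult_mat[OF A])
    then have "cmod ((A ^\<^sub>m k) $$ (i,j)) = s ^ k * cmod ((?T ^\<^sub>m k) $$ (i,j))"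
      using s by (simp add: norm_mult norm_power norm_inverse flip: power_mult_distrib)
    also have "\<dots> \<le> s ^ k * c"
      using c[of k] A ij s unfolding norm_bound_def by simp
    finally show "cmod ((A ^\<^sub>m k) $$ (i,j)) \<le> c * s ^ k" by (simp add: mult.commute)
  qed
  then show ?thesis by blast
qed

lemma spectral_radius_le_if_power_bound:
  assumes A: "A \<in> carrier_mat n n" and n: "n > 0" and s: "s > 0"
    and bound: "\<And>k. norm_bound (A ^\<^sub>m k) (c * s ^ k)"
  shows "spectral_radius A \<le> s"
proof (rule ccontr)
  assume "\<not> spectral_radius A \<le> s"
  moreover obtain \<mu> where "\<mu> \<in> spectrum A" and \<rho>: "spectral_radius A = cmod \<mu>"
    using spectral_radius_mem_max(1)[OF A n] by auto
  ultimately have gt: "cmod \<mu> / s > 1" using s by simp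
  obtain v where v: "eigenvector A v \<mu>"
    using \<open>\<mu> \<in> spectrum A\<close> unfolding spectrum_def eigenvalue_def by auto
  then have vc: "v \<in> carrier_vec n" and "v \<noteq> 0\<^sub>v n" using A unfolding eigenvector_def by auto
  then obtain i where i: "i < n" and vi: "v $ i \<noteq> 0" by (metis carrier_vecD eq_vecI index_zero_vec)
  define S where "S = (\<Sum>j<n. cmod (v $ j))"
  have "cmod \<mu> ^ k * cmod (v $ i) \<le> c * s ^ k * S" for k
  proof -
    have "cmod \<mu> ^ k * cmod (v $ i) = cmod ((A ^\<^sub>m k *\<^sub>v v) $ i)"
      using eigenvector_pow[OF A v, of k] i vc by (simp add: norm_mult norm_power)
    also have "\<dots> = cmod (\<Sum>j<n. (A ^\<^sub>m k) $$ (i,j) * v $ j)"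
      using A i vc by (simp add: scalar_prod_def atLeast0LessThan ac_simps)
    also have "\<dots> \<le> (\<Sum>j<n. cmod ((A ^\<^sub>m k) $$ (i,j)) * cmod (v $ j))"
      by (rule order_trans[OF norm_sum]) (simp add: norm_mult)
    also have "\<dots> \<le> (\<Sum>j<n. c * s ^ k * cmod (v $ j))"
      using bound[of k] A i unfolding norm_bound_def by (intro sum_mono mult_right_mono) auto
    finally show ?thesis by (simp add: S_def sum_distrib_left)
  qed
  then have "(cmod \<mu> / s) ^ k \<le> c * S / cmod (v $ i)" for k
    using s vi by (simp add: field_simps power_divide)
  moreover obtain k where "c * S / cmod (v $ i) < (cmod \<mu> / s) ^ k"
    using real_arch_pow[OF gt] by blast
  ultimately show False by (meson not_le)
qed

lemma spectral_radius_le_if_power_bounds: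
  assumes A: "A \<in> carrier_mat n n" and n: "n > 0" and r: "r \<ge> 0"
    and bounds: "\<And>s. r < s \<Longrightarrow> \<exists>c. \<forall>k. norm_bound (A ^\<^sub>m k) (c * s ^ k)"
  shows "spectral_radius A \<le> r"
proof (rule dense_ge)
  fix s assume "r < s"
  with bounds obtain c where c: "\<And>k. norm_bound (A ^\<^sub>m k) (c * s ^ k)" by blast
  show "spectral_radius A \<le> s"
    using \<open>r < s\<close> r by (intro spectral_radius_le_if_power_bound[OF A n _ c]) simp
qed

lemma spectral_radius_mono:
  assumes X: "X \<in> carrier_mat n n" and Z: "Z \<in> carrier_mat n n" and XZ: "abs_le_mat X Z"
  shows "spectral_radius X \<le> spectral_radius Z"
proof (cases "n = 0")
  case True
  then show ?thesis using X Z by (simp add: spectral_radius_carrier_mat_0)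
next
  case False
  then have n: "n > 0" by simp
  show ?thesis
  proof (rule spectral_radius_le_if_power_bounds[OF X n spectral_radius_nonneg[OF Z n]])
    fix s assume "spectral_radius Z < s"
    then obtain c where "\<forall>k. norm_bound (Z ^\<^sub>m k) (c * s ^ k)"
      using power_bound_if_spectral_radius_less[OF Z n] by blast
    then show "\<exists>c. \<forall>k. norm_bound (X ^\<^sub>m k) (c * s ^ k)"
      using norm_bound_if_abs_le_mat abs_le_mat_pow[OF XZ X] by blast
  qed
qed

lemma four_block_mat_antidiag_pow_even:
  fixes U V :: "'a :: semiring_1 mat"
  assumes U: "U \<in> carrier_mat n n" and V: "V \<in> carrier_mat n n"
  shows "four_block_mat (0\<^sub>m n n) U V (0\<^sub>m n n) ^\<^sub>m (2 * k)
       = four_block_mat ((U * V) ^\<^sub>m k) (0\<^sub>m n n) (0\<^sub>m n n) ((V * U) ^\<^sub>m k)"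
proof (induction k)
  case 0
  then show ?case using U V by (simp flip: four_block_one_mat)
next
  case (Suc k)
  let ?P = "four_block_mat (0\<^sub>m n n) U V (0\<^sub>m n n)"
  have P: "?P \<in> carrier_mat (n + n) (n + n)" using U V by simp
  have "?P ^\<^sub>m (2 * Suc k) = ?P ^\<^sub>m (2 * k) * (?P * ?P)"
    using P by (simp add: assoc_mult_mat[OF pow_carrier_mat[OF P] P P])
  also have "?P ^\<^sub>m (2 * k) = four_block_mat ((U * V) ^\<^sub>m k) (0\<^sub>m n n) (0\<^sub>m n n) ((V * U) ^\<^sub>m k)"
    by (rule Suc.IH)
  also have "?P * ?P = four_block_mat (U * V) (0\<^sub>m n n) (0\<^sub>m n n) (V * U)"
    using U V by (simp add: mult_four_block_mat[OF zero_carrier_mat U V zero_carrier_mat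
        zero_carrier_mat U V zero_carrier_mat])
  also have "four_block_mat ((U * V) ^\<^sub>m k) (0\<^sub>m n n) (0\<^sub>m n n) ((V * U) ^\<^sub>m k) * \<dots>
      = four_block_mat ((U * V) ^\<^sub>m Suc k) (0\<^sub>m n n) (0\<^sub>m n n) ((V * U) ^\<^sub>m Suc k)"
    using U V by (simp add: mult_four_block_mat[OF pow_carrier_mat zero_carrier_mat
        zero_carrier_mat pow_carrier_mat mult_carrier_mat zero_carrier_mat zero_carrier_mat
        mult_carrier_mat] mult_carrier_mat[OF pow_carrier_mat mult_carrier_mat])
  finally show ?case .
qed

lemma spectral_radius_mult_le_four_block_antidiag:
  fixes U V :: "complex mat"
  assumes U: "U \<in> carrier_mat n n" and V: "V \<in> carrier_mat n n" and n: "n > 0"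
  shows "spectral_radius (V * U) \<le> spectral_radius (four_block_mat (0\<^sub>m n n) U V (0\<^sub>m n n)) ^ 2"
proof (rule spectral_radius_le_if_power_bounds)
  let ?P = "four_block_mat (0\<^sub>m n n) U V (0\<^sub>m n n)"
  have P: "?P \<in> carrier_mat (n + n) (n + n)" using U V by simp
  fix s assume s: "spectral_radius ?P ^ 2 < s"
  have "0 \<le> spectral_radius ?P" using spectral_radius_nonneg[OF P] n by simp
  with s have "spectral_radius ?P < sqrt s" and "s \<ge> 0"
    using real_less_rsqrt by (auto intro: order_trans[OF zero_le_power2 less_imp_le])
  then obtain c where c: "\<And>k. norm_bound (?P ^\<^sub>m k) (c * sqrt s ^ k)"
    using power_bound_if_spectral_radius_less[OF P] n by auto
  have "norm_bound ((V * U) ^\<^sub>m k) (c * s ^ k)" for k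
  proof
    fix i j assume "i < dim_row ((V * U) ^\<^sub>m k)" "j < dim_col ((V * U) ^\<^sub>m k)"
    then have ij: "i < n" "j < n" using V U by (auto split: if_splits)
    have "(?P ^\<^sub>m (2 * k)) $$ (n + i, n + j) = ((V * U) ^\<^sub>m k) $$ (i, j)"
      using U V ij by (simp add: four_block_mat_antidiag_pow_even)
    moreover have "cmod ((?P ^\<^sub>m (2 * k)) $$ (n + i, n + j)) \<le> c * sqrt s ^ (2 * k)"
      using c[of "2 * k"] ij P unfolding norm_bound_def by simp
    ultimately show "cmod (((V * U) ^\<^sub>m k) $$ (i, j)) \<le> c * s ^ k"
      using \<open>s \<ge> 0\<close> by (simp add: power_mult)
  qed
  then show "\<exists>c. \<forall>k. norm_bound ((V * U) ^\<^sub>m k) (c * s ^ k)" by blast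
qed (use U V n in auto)

lemma two_step_iteration_matrix_factorization:
  fixes A M F Mi Fi :: "complex mat"
  assumes A: "A \<in> carrier_mat n n" and M: "M \<in> carrier_mat n n" and F: "F \<in> carrier_mat n n"
    and Mi: "Mi \<in> carrier_mat n n" and Fi: "Fi \<in> carrier_mat n n"
    and M_inv: "M * Mi = 1\<^sub>m n" and F_inv: "Fi * F = 1\<^sub>m n"
  shows "1\<^sub>m n - Fi * (M + F - A) * Mi * A = (1\<^sub>m n - Fi * A) * (1\<^sub>m n - Mi * A)"
proof -
  have C: "1\<^sub>m n - Fi * A \<in> carrier_mat n n" using A Fi by (simp add: minus_carrier_mat)
  have "Fi * (M + F - A) = Fi * M + Fi * F - Fi * A"
    using A M F Fi by (simp add: mult_minus_distrib_mat[of _ n n _ n] mult_add_distrib_mat[of _ n n _ n])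
  then have "Fi * (M + F - A) * Mi = Fi * M * Mi + Fi * F * Mi - Fi * A * Mi"
    using A M F Mi Fi
    by (simp add: add_mult_distrib_mat[of _ n n _ _ n] minus_mult_distrib_mat[of _ n n _ _ n])
  also have "\<dots> = Fi + Mi - Fi * A * Mi"
    using A M F Mi Fi M_inv F_inv by (simp add: assoc_mult_mat[of Fi n n M n Mi n])
  finally have lhs: "Fi * (M + F - A) * Mi * A = Fi * A + Mi * A - Fi * A * (Mi * A)"
    using A Mi Fi
    by (simp add: add_mult_distrib_mat[of _ n n _ _ n] minus_mult_distrib_mat[of _ n n _ _ n]
        assoc_mult_mat[of _ n n _ n _ n])
  have "(1\<^sub>m n - Fi * A) * (1\<^sub>m n - Mi * A) = 1\<^sub>m n - Fi * A - (1\<^sub>m n - Fi * A) * (Mi * A)"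
    using mult_minus_distrib_mat[OF C one_carrier_mat] A Mi C by simp
  also have "(1\<^sub>m n - Fi * A) * (Mi * A) = Mi * A - Fi * A * (Mi * A)"
    using A Mi Fi by (simp add: minus_mult_distrib_mat[of _ n n _ _ n])
  finally show ?thesis
    unfolding lhs using A Mi Fi by (intro eq_matI) auto
qed

theorem proposition1:
  fixes A M F Mi Fi :: "complex mat" and n :: nat
  assumes A: "A \<in> carrier_mat n n"
    and M: "M \<in> carrier_mat n n" and F: "F \<in> carrier_mat n n"
    and Mi: "Mi \<in> carrier_mat n n" and Fi: "Fi \<in> carrier_mat n n"
    and M_inv: "M * Mi = 1\<^sub>m n" "Mi * M = 1\<^sub>m n"
    and F_inv: "F * Fi = 1\<^sub>m n" "Fi * F = 1\<^sub>m n"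
    and rho_Q: "spectral_radius (abs_mat (four_block_mat (0\<^sub>m n n) (1\<^sub>m n - Mi * A)
                                                   (1\<^sub>m n - Fi * A) (0\<^sub>m n n))) < 1"
  shows "spectral_radius (abs_mat (1\<^sub>m n - Fi * (M + F - A) * Mi * A)) < 1"
proof (cases "n = 0")
  case True
  have "1\<^sub>m n - Fi * (M + F - A) * Mi * A \<in> carrier_mat n n"
    and "four_block_mat (0\<^sub>m n n) (1\<^sub>m n - Mi * A) (1\<^sub>m n - Fi * A) (0\<^sub>m n n) \<in> carrier_mat (n + n) (n + n)"
    using A M F Mi Fi by (auto intro!: minus_carrier_mat mult_carrier_mat add_carrier_mat)
  then show ?thesis
    using rho_Q True by (simp add: spectral_radius_carrier_mat_0)
next
  case False
  define B where "B = 1\<^sub>m n - Mi * A"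
  define C where "C = 1\<^sub>m n - Fi * A"
  define Q where "Q = four_block_mat (0\<^sub>m n n) B C (0\<^sub>m n n)"
  have B: "B \<in> carrier_mat n n" and C: "C \<in> carrier_mat n n"
    unfolding B_def C_def using A Mi Fi by (simp_all add: minus_carrier_mat)
  have Q: "abs_mat Q \<in> carrier_mat (n + n) (n + n)" unfolding Q_def using B C by simp
  have rho_Q': "spectral_radius (abs_mat Q) < 1" using rho_Q unfolding Q_def B_def C_def .
  have "1\<^sub>m n - Fi * (M + F - A) * Mi * A = C * B"
    unfolding B_def C_def by (rule two_step_iteration_matrix_factorization[OF A M F Mi Fi M_inv(1) F_inv(2)])
  moreover have "spectral_radius (abs_mat (C * B)) \<le> spectral_radius (abs_mat C * abs_mat B)"
  proof (rule spectral_radius_mono)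
    show "abs_le_mat (abs_mat (C * B)) (abs_mat C * abs_mat B)"
      unfolding abs_le_mat_abs_mat_iff using B C by (intro abs_le_mat_mult abs_le_mat_abs_mat) simp
  qed (use B C in auto)
  also have "\<dots> \<le> spectral_radius (abs_mat Q) ^ 2"
    using spectral_radius_mult_le_four_block_antidiag[of "abs_mat B" n "abs_mat C"] B C False
    unfolding Q_def by (simp add: abs_mat_four_block_mat[OF zero_carrier_mat B C zero_carrier_mat])
  also have "\<dots> < 1"
    using rho_Q' spectral_radius_nonneg[OF Q] False by (simp add: power_less_one_iff)
  finally show ?thesis by simp
qed
end
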